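(* Let $\mathbb{F}$ be any field and let $n,d\ge 1$. For every $n^d\times n^d$ matrix $M$ over $\mathbb{F}$, \[ \mathcal{L}_{\mathsf{sm}}\big(\mathrm{ShiftedTensor}(M)\big)\;\ge\;\frac{\mathrm{PT\text{-}rank}(M)}{n^{\,d-\log_2 d+1}}. \] Equivalently, every syntactically set-multilinear arithmetic formula computing the set-multilinear polynomial \[ \widetilde Q_M=\sum_{\vec i,\vec j\in[n]^d} M_{\vec i,\vec j}\,\widetilde X^{(0)}_{i_1}\widetilde X^{(1)}_{j_1,i_2}\cdots\widetilde X^{(d-1)}_{j_{d-1},i_d}\widetilde X^{(d)}_{j_d} \] (with respect to the $d+1$ variable blocks $\widetilde X^{(0)},\dots,\widetilde X^{(d)}$) has at least $\mathrm{PT\text{-}rank}(M)/n^{d-\log_2 d+1}$ leaves.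
   Context: Rows and columns of an $n^d\times n^d$ matrix $M$ are indexed by $d$-tuples in $[n]^d$. For $k\in[d]$ the $k$-th partial transpose is $M^{\top_k}_{(i_1,\dots,i_d),(j_1,\dots,j_d)}=M_{(i_1,\dots,i_{k-1},j_k,i_{k+1},\dots,i_d),(j_1,\dots,j_{k-1},i_k,j_{k+1},\dots,j_d)}$; for $\kappa\subseteq[d]$, $M^{\top_\kappa}$ is the composition of the (commuting) $\top_k$, $k\in\kappa$. $M$ is PT-basic if $\mathrm{rank}(M^{\top_\kappa})=1$ for some $\kappa\subseteq[d]$; $\mathrm{PT\text{-}rank}(M)$ is the minimum number of PT-basic matrices summing to $M$. Pairing: $\langle i,j\rangle=(i-1)n+j$, a bijection $[n]^2\to[n^2]$. $\mathrm{ShiftedTensor}(M):[n^2]^{d+1}\to\mathbb{F}$ is defined by $\mathrm{ShiftedTensor}(M)(\langle p,i_1\rangle,\langle j_1,i_2\rangle,\dots,\langle j_{d-1},i_d\rangle,\langle j_d,q\rangle)=\mathbb 1\{p=q=1\}\,M_{(i_1,\dots,i_d),(j_1,\dots,j_d)}$. Set-multilinear formula size: for a nonempty finite set $D$ and a tensor $A:[N]^D\to\mathbb{F}$, $\mathcal L_{\mathsf{sm}}(A)$ is defined inductively: if $|D|=1$, it is $1$ if $A\neq 0$ and $0$ otherwise; if $|D|\ge 2$, it is the minimum of $\sum_i(\mathcal L_{\mathsf{sm}}(B_i)+\mathcal L_{\mathsf{sm}}(C_i))$ over finite families $(E_i,F_i,B_i,C_i)$ with $E_i,F_i$ disjoint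 nonempty, $E_i\cup F_i=D$, $B_i:[N]^{E_i}\to\mathbb{F}$, $C_i:[N]^{F_i}\to\mathbb{F}$ and $A=\sum_i B_i\otimes C_i$. This equals the minimum number of leaves of a syntactically set-multilinear formula computing $\sum_{a\in[N]^D}A(a)\prod_{k\in D}X^{(k)}_{a_k}$. Logarithms are base 2. *)

theory Defs
  imports Complex_Main "HOL-Library.FuncSet" "Jordan_Normal_Form.DL_Rank"
begin

(* Conventions: all index ranges are 0-based.  [n] is {0..<n}; a d-tuple in [n]^d is an
   extensional function in PiE {0..<d} (\<lambda>_. {0..<n}).  An n^d x n^d matrix is a function
   M :: (nat \<Rightarrow> nat) \<Rightarrow> (nat \<Rightarrow> nat) \<Rightarrow> 'a, only its values on tuples matter. *)

definition tuples :: "nat \<Rightarrow> nat \<Rightarrow> (nat \<Rightarrow> nat) set" where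
  "tuples n d = PiE {0..<d} (\<lambda>_. {0..<n})"

(* partial transpose w.r.t. a set kappa of coordinates: composition of the (commuting)
   single-coordinate partial transposes, written out *)
definition partial_transpose ::
  "nat set \<Rightarrow> ((nat \<Rightarrow> nat) \<Rightarrow> (nat \<Rightarrow> nat) \<Rightarrow> 'a) \<Rightarrow> (nat \<Rightarrow> nat) \<Rightarrow> (nat \<Rightarrow> nat) \<Rightarrow> 'a" where
  "partial_transpose \<kappa> M i j =
     M (\<lambda>t. if t \<in> \<kappa> then j t else i t) (\<lambda>t. if t \<in> \<kappa> then i t else j t)"

(* the matrix as a Jordan_Normal_Form matrix, rows/cols ordered by an (arbitrary) fixed
   bijection {0..<n^d} \<rightarrow> [n]^d; the rank does not depend on the chosen ordering *)
definition tuple_enum :: "nat \<Rightarrow> nat \<Rightarrow> nat \<Rightarrow> (nat \<Rightarrow> nat)" where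
  "tuple_enum n d = (SOME g. bij_betw g {0..<n^d} (tuples n d))"

definition to_mat :: "nat \<Rightarrow> nat \<Rightarrow> ((nat \<Rightarrow> nat) \<Rightarrow> (nat \<Rightarrow> nat) \<Rightarrow> 'a) \<Rightarrow> 'a mat" where
  "to_mat n d M = mat (n^d) (n^d) (\<lambda>(r, c). M (tuple_enum n d r) (tuple_enum n d c))"

definition tmat_rank :: "nat \<Rightarrow> nat \<Rightarrow> ((nat \<Rightarrow> nat) \<Rightarrow> (nat \<Rightarrow> nat) \<Rightarrow> 'a::field) \<Rightarrow> nat" where
  "tmat_rank n d M = vec_space.rank (n^d) (to_mat n d M)"

definition PT_basic :: "nat \<Rightarrow> nat \<Rightarrow> ((nat \<Rightarrow> nat) \<Rightarrow> (nat \<Rightarrow> nat) \<Rightarrow> 'a::field) \<Rightarrow> bool" where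
  "PT_basic n d M \<longleftrightarrow> (\<exists>\<kappa> \<subseteq> {0..<d}. tmat_rank n d (partial_transpose \<kappa> M) = 1)"

definition PT_rank :: "nat \<Rightarrow> nat \<Rightarrow> ((nat \<Rightarrow> nat) \<Rightarrow> (nat \<Rightarrow> nat) \<Rightarrow> 'a::field) \<Rightarrow> nat" where
  "PT_rank n d M = (LEAST r. \<exists>Ms :: nat \<Rightarrow> ((nat \<Rightarrow> nat) \<Rightarrow> (nat \<Rightarrow> nat) \<Rightarrow> 'a).
      (\<forall>l<r. PT_basic n d (Ms l)) \<and>
      (\<forall>i\<in>tuples n d. \<forall>j\<in>tuples n d. M i j = (\<Sum>l<r. Ms l i j)))"

(* pairing <p,i> = p*n + i (0-based version of (p-1)n+i) *)
definition shifted_tensor :: "nat \<Rightarrow> nat \<Rightarrow> ((nat \<Rightarrow> nat) \<Rightarrow> (nat \<Rightarrow> nat) \<Rightarrow> 'a::field)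
    \<Rightarrow> (nat \<Rightarrow> nat) \<Rightarrow> 'a" where
  "shifted_tensor n d M a =
     (let i = (\<lambda>k\<in>{0..<d}. a k mod n);
          j = (\<lambda>k\<in>{0..<d}. a (Suc k) div n)
      in if a 0 div n = 0 \<and> a d mod n = 0 then M i j else 0)"

(* tensors A : [N]^D \<rightarrow> F, as functions on extensional index functions *)
definition tdom :: "nat \<Rightarrow> nat set \<Rightarrow> (nat \<Rightarrow> nat) set" where
  "tdom N D = PiE D (\<lambda>_. {0..<N})"

inductive smf :: "nat \<Rightarrow> nat set \<Rightarrow> ((nat \<Rightarrow> nat) \<Rightarrow> 'a::field) \<Rightarrow> nat \<Rightarrow> bool" for N where
  base: "card D = 1 \<Longrightarrow> smf N D A (if (\<forall>a\<in>tdom N D. A a = 0) then 0 else 1)"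
| step: "finite D \<Longrightarrow> card D \<ge> 2 \<Longrightarrow>
    (\<forall>l<(m::nat). E l \<noteq> {} \<and> F l \<noteq> {} \<and> E l \<inter> F l = {} \<and> E l \<union> F l = D
           \<and> smf N (E l) (B l) (b l) \<and> smf N (F l) (C l) (c l)) \<Longrightarrow>
    (\<forall>a\<in>tdom N D. A a = (\<Sum>l<m. B l (restrict a (E l)) * C l (restrict a (F l)))) \<Longrightarrow>
    smf N D A (\<Sum>l<m. b l + c l)"

definition L_sm :: "nat \<Rightarrow> nat set \<Rightarrow> ((nat \<Rightarrow> nat) \<Rightarrow> 'a::field) \<Rightarrow> nat" where
  "L_sm N D A = (LEAST s. smf N D A s)"

end

theory Submission
  imports Defs "HOL-Library.Disjoint_Sets"
begin

(* A set-multilinear formula with L leaves for a tensor on the coordinate set D is a sum of at most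
   L product terms, each a product of factors on the blocks of a partition P of D with
   card D <= 2 ^ (card P - 1): at a product gate keep the terms of the side with more coordinates
   and add the other side as one new block.

   For the shifted tensor the coordinates 0..d form a path, coordinate k carrying the pair
   (j (k - 1), i k).  Colour the blocks of a partition with k blocks red and blue so that at most
   d + 1 - k of the d edges (t, t + 1) are monochromatic, and fix j t on each monochromatic edge;
   this splits the term into n ^ (d + 1 - k) slices.  After transposing the matrix coordinates t
   with t blue, red factors depend only on the row and blue factors only on the column, so every
   slice is PT-basic.  As k - 1 >= log2 (d + 1), PT-rank M <= L * n ^ (d - log2 d + 1). *)

section \<open>Rank of matrices indexed by tuples\<close>

lemma (in vec_space) lin_indpt_singleton:
  assumes "v \<in> carrier_vec n" and "v \<noteq> 0\<^sub>v n"
  shows "lin_indpt {v}"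
proof -
  have "lin_indpt {}" by (simp add: lin_dep_def)
  moreover have "v \<notin> span {}" using span_empty assms by simp
  ultimately show ?thesis using lin_dep_iff_in_span[of "{}" v] assms by simp
qed

lemma (in vec_space) rank_ge_1_if_nonzero_entry:
  assumes A: "A \<in> carrier_mat n nc" and "r < n" "c < nc" "A $$ (r, c) \<noteq> 0"
  shows "rank A \<ge> 1"
proof -
  have "col A c \<in> carrier_vec n" using A by auto
  moreover have "col A c $ r \<noteq> 0" using assms by auto
  then have "col A c \<noteq> 0\<^sub>v n" using \<open>r < n\<close> by auto
  moreover have "col A c \<in> set (cols A)"
    using A \<open>c < nc\<close> by (metis carrier_matD(2) cols_length cols_nth nth_mem)
  ultimately show ?thesis
    using rank_ge_card_indpt[OF A, of "{col A c}"] lin_indpt_singleton by auto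
qed

lemma finite_tuples: "finite (tuples n d)"
  and card_tuples: "card (tuples n d) = n ^ d"
  unfolding tuples_def by (auto simp: card_PiE finite_PiE)

lemma tuple_enum_bij: "bij_betw (tuple_enum n d) {0..<n^d} (tuples n d)"
  unfolding tuple_enum_def
  using ex_bij_betw_nat_finite[OF finite_tuples[of n d]] unfolding card_tuples by (rule someI_ex)

lemma to_mat_carrier: "to_mat n d M \<in> carrier_mat (n^d) (n^d)"
  unfolding to_mat_def by auto

lemma to_mat_index:
  "r < n^d \<Longrightarrow> c < n^d \<Longrightarrow> to_mat n d M $$ (r, c) = M (tuple_enum n d r) (tuple_enum n d c)"
  unfolding to_mat_def by auto

lemma tmat_rank_le_1_if_product:
  assumes "\<forall>r\<in>tuples n d. \<forall>c\<in>tuples n d. M r c = u r * v c"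
  shows "tmat_rank n d M \<le> 1"
  unfolding tmat_rank_def
proof (rule vec_space.rank_le_1_product_entries[OF to_mat_carrier,
      of _ _ _ "\<lambda>r. u (tuple_enum n d r)" "\<lambda>c. v (tuple_enum n d c)"])
  fix r c assume "r < dim_row (to_mat n d M)" "c < dim_col (to_mat n d M)"
  then have rc: "r < n^d" "c < n^d" using to_mat_carrier[of n d M] by auto
  then have "tuple_enum n d r \<in> tuples n d" "tuple_enum n d c \<in> tuples n d"
    using tuple_enum_bij[of n d] bij_betwE by fastforce+
  then show "to_mat n d M $$ (r, c) = u (tuple_enum n d r) * v (tuple_enum n d c)"
    using assms to_mat_index[OF rc, of M] by simp
qed

lemma tmat_rank_ge_1_if_nonzero:
  assumes "i \<in> tuples n d" "j \<in> tuples n d" "M i j \<noteq> 0"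
  shows "tmat_rank n d M \<ge> 1"
proof -
  have "i \<in> tuple_enum n d ` {0..<n^d}" "j \<in> tuple_enum n d ` {0..<n^d}"
    using tuple_enum_bij[of n d] assms(1,2) by (simp_all add: bij_betw_def)
  then obtain r c where "r < n^d" "c < n^d" "tuple_enum n d r = i" "tuple_enum n d c = j"
    by auto
  then show ?thesis
    unfolding tmat_rank_def using assms(3)
    by (intro vec_space.rank_ge_1_if_nonzero_entry[OF to_mat_carrier, where r = r and c = c])
      (auto simp: to_mat_index)
qed

lemma tuples_merge:
  "i \<in> tuples n d \<Longrightarrow> j \<in> tuples n d \<Longrightarrow> (\<lambda>t. if t \<in> \<kappa> then i t else j t) \<in> tuples n d"
  unfolding tuples_def by (auto simp: PiE_iff extensional_def)

lemma PT_basic_if_partial_transpose_product: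
  assumes "\<kappa> \<subseteq> {0..<d}"
    and "\<forall>r\<in>tuples n d. \<forall>c\<in>tuples n d. partial_transpose \<kappa> M r c = u r * v c"
    and "i \<in> tuples n d" "j \<in> tuples n d" "M i j \<noteq> 0"
  shows "PT_basic n d M"
proof -
  let ?r = "\<lambda>t. if t \<in> \<kappa> then j t else i t" and ?c = "\<lambda>t. if t \<in> \<kappa> then i t else j t"
  have "partial_transpose \<kappa> M ?r ?c = M i j"
    unfolding partial_transpose_def by (simp cong: if_cong)
  then have "tmat_rank n d (partial_transpose \<kappa> M) \<ge> 1"
    using assms(3-5) by (intro tmat_rank_ge_1_if_nonzero[of ?r _ _ ?c]) (auto intro: tuples_merge)
  moreover have "tmat_rank n d (partial_transpose \<kappa> M) \<le> 1"
    using assms(2) by (rule tmat_rank_le_1_if_product)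
  ultimately show ?thesis unfolding PT_basic_def using assms(1) by auto
qed

section \<open>PT-rank\<close>

lemma PT_rank_cong:
  assumes "\<And>i j. i \<in> tuples n d \<Longrightarrow> j \<in> tuples n d \<Longrightarrow> M i j = M' i j"
  shows "PT_rank n d M = PT_rank n d M'"
  unfolding PT_rank_def using assms by simp

definition PT_decomposition ::
    "nat \<Rightarrow> nat \<Rightarrow> ((nat \<Rightarrow> nat) \<Rightarrow> (nat \<Rightarrow> nat) \<Rightarrow> 'a::field) \<Rightarrow> nat
      \<Rightarrow> (nat \<Rightarrow> (nat \<Rightarrow> nat) \<Rightarrow> (nat \<Rightarrow> nat) \<Rightarrow> 'a) \<Rightarrow> bool" where
  "PT_decomposition n d M r Ms \<longleftrightarrow> (\<forall>l<r. PT_basic n d (Ms l)) \<and>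
     (\<forall>i\<in>tuples n d. \<forall>j\<in>tuples n d. M i j = (\<Sum>l<r. Ms l i j))"

lemma PT_rank_eq_Least: "PT_rank n d M = (LEAST r. \<exists>Ms. PT_decomposition n d M r Ms)"
  unfolding PT_rank_def PT_decomposition_def ..

lemma ex_PT_decomposition_le_card:
  fixes Ms :: "'i \<Rightarrow> (nat \<Rightarrow> nat) \<Rightarrow> (nat \<Rightarrow> nat) \<Rightarrow> 'a::field"
  assumes "finite X"
    and basic: "\<And>x. x \<in> X \<Longrightarrow> PT_basic n d (Ms x) \<or> (\<forall>i\<in>tuples n d. \<forall>j\<in>tuples n d. Ms x i j = 0)"
    and sum: "\<And>i j. i \<in> tuples n d \<Longrightarrow> j \<in> tuples n d \<Longrightarrow> M i j = (\<Sum>x\<in>X. Ms x i j)"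
  shows "\<exists>r Ms'. r \<le> card X \<and> PT_decomposition n d M r Ms'"
proof -
  define Y where "Y = {x \<in> X. PT_basic n d (Ms x)}"
  have "finite Y" "Y \<subseteq> X" using \<open>finite X\<close> by (auto simp: Y_def)
  obtain e where e: "bij_betw e {..<card Y} Y"
    using ex_bij_betw_nat_finite[OF \<open>finite Y\<close>] unfolding atLeast0LessThan ..
  have sum_Y: "M i j = (\<Sum>l<card Y. Ms (e l) i j)" if "i \<in> tuples n d" "j \<in> tuples n d" for i j
  proof -
    have "M i j = (\<Sum>x\<in>X. Ms x i j)" by (rule sum[OF that])
    also have "\<dots> = (\<Sum>x\<in>Y. Ms x i j)"
    proof (rule sum.mono_neutral_right[OF \<open>finite X\<close> \<open>Y \<subseteq> X\<close>], intro ballI)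
      fix x assume "x \<in> X - Y"
      with basic[of x] that show "Ms x i j = 0" by (simp add: Y_def)
    qed
    also have "\<dots> = (\<Sum>l<card Y. Ms (e l) i j)"
      by (rule sum.reindex_bij_betw[OF e, symmetric])
    finally show ?thesis .
  qed
  have "PT_basic n d (Ms (e l))" if "l < card Y" for l
    using bij_betwE[OF e] that by (simp add: Y_def)
  with sum_Y have "PT_decomposition n d M (card Y) (\<lambda>l. Ms (e l))"
    by (simp add: PT_decomposition_def)
  moreover have "card Y \<le> card X" using \<open>finite X\<close> \<open>Y \<subseteq> X\<close> by (rule card_mono)
  ultimately show ?thesis by blast
qed

lemma PT_rank_le_card:
  fixes Ms :: "'i \<Rightarrow> (nat \<Rightarrow> nat) \<Rightarrow> (nat \<Rightarrow> nat) \<Rightarrow> 'a::field"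
  assumes "finite X"
    and "\<And>x. x \<in> X \<Longrightarrow> PT_basic n d (Ms x) \<or> (\<forall>i\<in>tuples n d. \<forall>j\<in>tuples n d. Ms x i j = 0)"
    and "\<And>i j. i \<in> tuples n d \<Longrightarrow> j \<in> tuples n d \<Longrightarrow> M i j = (\<Sum>x\<in>X. Ms x i j)"
  shows "PT_rank n d M \<le> card X"
proof -
  obtain r Ms' where "r \<le> card X" "PT_decomposition n d M r Ms'"
    using ex_PT_decomposition_le_card[OF assms] by blast
  then have "PT_rank n d M \<le> r" unfolding PT_rank_eq_Least by (blast intro: Least_le)
  with \<open>r \<le> card X\<close> show ?thesis by simp
qed

text \<open>Every matrix is the sum of its single-entry matrices, each zero or of rank one, so the
  minimum defining \<^const>\<open>PT_rank\<close> is attained.\<close>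

lemma ex_PT_decomposition: "\<exists>Ms. PT_decomposition n d M (PT_rank n d M) Ms"
proof -
  define E where "E = (\<lambda>pq i j. if i = fst pq \<and> j = snd pq then M i j else 0)"
  have basic: "PT_basic n d (E pq) \<or> (\<forall>i\<in>tuples n d. \<forall>j\<in>tuples n d. E pq i j = 0)"
    if "pq \<in> tuples n d \<times> tuples n d" for pq
  proof (cases "M (fst pq) (snd pq) = 0")
    case False
    have "\<forall>r\<in>tuples n d. \<forall>c\<in>tuples n d. partial_transpose {} (E pq) r c
        = (if r = fst pq then M (fst pq) (snd pq) else 0) * (if c = snd pq then 1 else 0)"
      by (simp add: partial_transpose_def E_def)
    with that False show ?thesis
      by (intro disjI1 PT_basic_if_partial_transpose_product[of "{}" d n _
            "\<lambda>r. if r = fst pq then M (fst pq) (snd pq) else 0" "\<lambda>c. if c = snd pq then 1 else 0"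
            "fst pq" "snd pq"])
        (auto simp: E_def)
  qed (simp add: E_def)
  have sum: "M i j = (\<Sum>pq\<in>tuples n d \<times> tuples n d. E pq i j)"
    if "i \<in> tuples n d" "j \<in> tuples n d" for i j
  proof -
    have "(\<Sum>pq\<in>tuples n d \<times> tuples n d. E pq i j) = (\<Sum>pq\<in>{(i, j)}. E pq i j)"
      using that finite_tuples by (intro sum.mono_neutral_right) (auto simp: E_def)
    then show ?thesis by (simp add: E_def)
  qed
  obtain r Ms where "PT_decomposition n d M r Ms"
    using ex_PT_decomposition_le_card[of "tuples n d \<times> tuples n d" n d E M] finite_tuples basic sum
    by blast
  then have "\<exists>Ms. PT_decomposition n d M r Ms" by blast
  then show ?thesis
    unfolding PT_rank_eq_Least by (rule LeastI[of "\<lambda>r. \<exists>Ms. PT_decomposition n d M r Ms"])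
qed

lemma PT_rank_sum_le:
  fixes Ms :: "'i \<Rightarrow> (nat \<Rightarrow> nat) \<Rightarrow> (nat \<Rightarrow> nat) \<Rightarrow> 'a::field"
  assumes "finite X"
  shows "PT_rank n d (\<lambda>i j. \<Sum>x\<in>X. Ms x i j) \<le> (\<Sum>x\<in>X. PT_rank n d (Ms x))"
proof -
  have "\<forall>x. \<exists>D. PT_decomposition n d (Ms x) (PT_rank n d (Ms x)) D"
    using ex_PT_decomposition by blast
  then obtain Ds where Ds: "\<And>x. PT_decomposition n d (Ms x) (PT_rank n d (Ms x)) (Ds x)"
    by (metis choice)
  define Z where "Z = (SIGMA x:X. {..<PT_rank n d (Ms x)})"
  have "PT_rank n d (\<lambda>i j. \<Sum>x\<in>X. Ms x i j) \<le> card Z"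
  proof (rule PT_rank_le_card[of _ _ _ "\<lambda>(x, l). Ds x l"])
    show "finite Z" using assms by (simp add: Z_def)
    show "PT_basic n d ((\<lambda>(x, l). Ds x l) z) \<or> (\<forall>i\<in>tuples n d. \<forall>j\<in>tuples n d. (\<lambda>(x, l). Ds x l) z i j = 0)"
      if "z \<in> Z" for z
      using Ds that by (auto simp: Z_def PT_decomposition_def)
    show "(\<Sum>x\<in>X. Ms x i j) = (\<Sum>z\<in>Z. (\<lambda>(x, l). Ds x l) z i j)"
      if "i \<in> tuples n d" "j \<in> tuples n d" for i j
    proof -
      have "(\<Sum>x\<in>X. Ms x i j) = (\<Sum>x\<in>X. \<Sum>l<PT_rank n d (Ms x). Ds x l i j)"
        using Ds that by (simp add: PT_decomposition_def)
      also have "\<dots> = (\<Sum>(x, l)\<in>Z. Ds x l i j)"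
        unfolding Z_def using assms by (intro sum.Sigma) auto
      finally show ?thesis by (simp add: case_prod_unfold)
    qed
  qed
  also have "card Z = (\<Sum>x\<in>X. PT_rank n d (Ms x))"
    using assms by (simp add: Z_def card_SigmaI)
  finally show ?thesis .
qed

section \<open>Two-colourings of a path\<close>

lemma ex_coloring_many_color_changes:
  fixes g :: "nat \<Rightarrow> 'b"
  shows "\<exists>col :: 'b \<Rightarrow> bool. card (g ` {0..d}) \<le> card {t. t < d \<and> col (g t) \<noteq> col (g (Suc t))} + 1"
proof (induction d)
  case (Suc d)
  then obtain col :: "'b \<Rightarrow> bool"
    where col: "card (g ` {0..d}) \<le> card {t. t < d \<and> col (g t) \<noteq> col (g (Suc t))} + 1"
    by blast
  have range: "g ` {0..Suc d} = insert (g (Suc d)) (g ` {0..d})"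
    by (auto simp: atLeast0_atMost_Suc)
  show ?case
  proof (cases "g (Suc d) \<in> g ` {0..d}")
    case True
    have "card {t. t < d \<and> col (g t) \<noteq> col (g (Suc t))}
        \<le> card {t. t < Suc d \<and> col (g t) \<noteq> col (g (Suc t))}"
      by (rule card_mono) auto
    with True col range show ?thesis by (intro exI[of _ col]) (simp add: insert_absorb)
  next
    case False
    define col' where "col' = col(g (Suc d) := \<not> col (g d))"
    have "g t \<noteq> g (Suc d)" if "t \<le> d" for t
      using False that by (metis atLeastAtMost_iff image_eqI le0)
    then have "{t. t < Suc d \<and> col' (g t) \<noteq> col' (g (Suc t))}
        = insert d {t. t < d \<and> col (g t) \<noteq> col (g (Suc t))}"
      by (auto simp: col'_def less_Suc_eq)
    with False col range show ?thesis by (intro exI[of _ col']) simp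
  qed
qed simp

lemma the_part_eq:
  assumes "partition_on A P" "S \<in> P" "x \<in> S"
  shows "(THE S. S \<in> P \<and> x \<in> S) = S"
  using assms by (intro the_equality) (auto simp: partition_on_def disjoint_def)

lemma partition_two_coloring:
  assumes P: "partition_on {0..d} P"
  obtains R where "\<forall>S\<in>P. S \<subseteq> R \<or> S \<subseteq> - R"
    and "card {t. t < d \<and> (t \<in> R \<longleftrightarrow> Suc t \<in> R)} + card P \<le> d + 1"
proof -
  define g where "g k = (THE S. S \<in> P \<and> k \<in> S)" for k
  have g: "g k = S" if "S \<in> P" "k \<in> S" for S k
    unfolding g_def using P that by (rule the_part_eq)
  have image: "g ` {0..d} = P"
  proof
    show "g ` {0..d} \<subseteq> P" using partition_onD1[OF P] g by auto
    show "P \<subseteq> g ` {0..d}"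
    proof
      fix S assume "S \<in> P"
      then obtain k where "k \<in> S" using partition_onD3[OF P] by (metis ex_in_conv)
      with \<open>S \<in> P\<close> g partition_onD1[OF P] show "S \<in> g ` {0..d}" by blast
    qed
  qed
  obtain col :: "nat set \<Rightarrow> bool" where
    "card (g ` {0..d}) \<le> card {t. t < d \<and> col (g t) \<noteq> col (g (Suc t))} + 1"
    using ex_coloring_many_color_changes[of g d] by (elim exE)
  moreover define R where "R = {k. col (g k)}"
  ultimately have changes: "card P \<le> card {t. t < d \<and> \<not> (t \<in> R \<longleftrightarrow> Suc t \<in> R)} + 1"
    using image by simp
  have split: "card {t. t < d \<and> p t} + card {t. t < d \<and> \<not> p t} = d" for p
  proof -
    have "{t. t < d \<and> p t} \<union> {t. t < d \<and> \<not> p t} = {..<d}" by blast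
    then show ?thesis by (subst card_Un_disjoint[symmetric]) auto
  qed
  from changes split[of "\<lambda>t. t \<in> R \<longleftrightarrow> Suc t \<in> R"]
  have "card {t. t < d \<and> (t \<in> R \<longleftrightarrow> Suc t \<in> R)} + card P \<le> d + 1"
    by linarith
  moreover have "\<forall>S\<in>P. S \<subseteq> R \<or> S \<subseteq> - R"
    using g by (auto simp: R_def)
  ultimately show ?thesis using that by blast
qed

lemma card_partition_on_le:
  assumes "finite A" "partition_on A P"
  shows "card P \<le> card A"
proof -
  have "card p \<ge> 1" if "p \<in> P" for p
    using assms that by (auto simp: partition_on_def Suc_le_eq card_gt_0_iff intro: finite_subset)
  then have "card P \<le> (\<Sum>p\<in>P. card p)"
    using sum_mono[of P "\<lambda>_. 1" card] by simp
  also have "\<dots> = card A"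
    using assms by (intro product_partition[symmetric]) (auto simp: partition_on_def intro: finite_subset)
  finally show ?thesis .
qed

section \<open>Product terms of the shifted tensor\<close>

definition product_term ::
    "nat set set \<Rightarrow> (nat set \<Rightarrow> (nat \<Rightarrow> nat) \<Rightarrow> 'a::comm_monoid_mult) \<Rightarrow> (nat \<Rightarrow> nat) \<Rightarrow> 'a" where
  "product_term P f a = (\<Prod>S\<in>P. f S (restrict a S))"

lemma product_term_split:
  assumes "finite P" "{} \<notin> P" "\<forall>S\<in>P. S \<subseteq> R \<or> S \<subseteq> - R"
    and "\<forall>k\<in>\<Union>P. k \<in> R \<longrightarrow> a k = y k" "\<forall>k\<in>\<Union>P. k \<notin> R \<longrightarrow> a k = z k"
  shows "product_term P f a = product_term {S\<in>P. S \<subseteq> R} f y * product_term {S\<in>P. S \<subseteq> - R} f z"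
proof -
  let ?red = "{S\<in>P. S \<subseteq> R}" and ?blue = "{S\<in>P. S \<subseteq> - R}"
  have "?red \<inter> ?blue = {}"
  proof -
    have "S = {}" if "S \<subseteq> R" "S \<subseteq> - R" for S using that by blast
    with assms(2) show ?thesis by blast
  qed
  then have "product_term (?red \<union> ?blue) f a = product_term ?red f a * product_term ?blue f a"
    unfolding product_term_def using \<open>finite P\<close> by (intro prod.union_disjoint) auto
  moreover have "?red \<union> ?blue = P" using assms(3) by blast
  ultimately have "product_term P f a = product_term ?red f a * product_term ?blue f a"
    by simp
  also have "product_term ?red f a = product_term ?red f y"
    unfolding product_term_def using assms(4)
    by (intro prod.cong refl arg_cong[where f = "f _"] restrict_ext) blast
  also have "product_term ?blue f a = product_term ?blue f z"
    unfolding product_term_def using assms(5)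
    by (intro prod.cong refl arg_cong[where f = "f _"] restrict_ext) blast
  finally show ?thesis .
qed

text \<open>The index of the entry \<open>M i j\<close> in \<^const>\<open>shifted_tensor\<close>: coordinate \<open>k\<close> carries
  the pair \<open>\<langle>j (k - 1), i k\<rangle>\<close>, where \<open>j (-1)\<close> and \<open>i d\<close> are read as \<open>0\<close>.\<close>

definition shifted_index :: "nat \<Rightarrow> nat \<Rightarrow> (nat \<Rightarrow> nat) \<Rightarrow> (nat \<Rightarrow> nat) \<Rightarrow> nat \<Rightarrow> nat" where
  "shifted_index n d i j =
     (\<lambda>k\<in>{0..d}. (if k = 0 then 0 else j (k - 1) * n) + (if k < d then i k else 0))"

lemma pair_less_square:
  assumes "p < n" "q < n" shows "p * n + q < (n::nat)^2"
proof -
  have "p * n + q < Suc p * n" using assms(2) by simp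
  also have "\<dots> \<le> n * n" using assms(1) by (intro mult_right_mono) auto
  finally show ?thesis by (simp add: power2_eq_square)
qed

lemma shifted_index_in_tdom:
  assumes "n \<ge> 1" "i \<in> tuples n d" "j \<in> tuples n d"
  shows "shifted_index n d i j \<in> tdom (n^2) {0..d}"
proof -
  have "shifted_index n d i j k < n^2" if "k \<le> d" for k
  proof -
    have "(if k = 0 then 0 else j (k - 1)) < n" "(if k < d then i k else 0) < n"
      using assms that unfolding tuples_def by (auto simp: PiE_iff)
    moreover have "shifted_index n d i j k
        = (if k = 0 then 0 else j (k - 1)) * n + (if k < d then i k else 0)"
      using that by (cases "k = 0") (simp_all add: shifted_index_def)
    ultimately show ?thesis by (simp add: pair_less_square)
  qed
  then show ?thesis unfolding shifted_index_def tdom_def by (auto simp: PiE_iff)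
qed

lemma shifted_tensor_shifted_index:
  assumes "n \<ge> 1" "i \<in> tuples n d" "j \<in> tuples n d"
  shows "shifted_tensor n d M (shifted_index n d i j) = M i j"
proof -
  have i: "k < d \<Longrightarrow> i k < n" for k
    using assms(2) unfolding tuples_def by (auto simp: PiE_iff)
  let ?a = "shifted_index n d i j"
  have "(\<lambda>k\<in>{0..<d}. ?a k mod n) = i"
    using assms(2) i unfolding shifted_index_def tuples_def by (auto simp: PiE_iff extensional_def)
  moreover have "(\<lambda>k\<in>{0..<d}. ?a (Suc k) div n) = j"
    using assms(1,3) i unfolding shifted_index_def tuples_def by (auto simp: PiE_iff extensional_def)
  moreover have "?a 0 div n = 0" "?a d mod n = 0"
    using i[of 0] unfolding shifted_index_def by auto
  ultimately show ?thesis unfolding shifted_tensor_def Let_def by simp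
qed

lemma shifted_index_cong:
  assumes "k < d \<Longrightarrow> i k = i' k" and "0 < k \<Longrightarrow> j (k - 1) = j' (k - 1)"
  shows "shifted_index n d i j k = shifted_index n d i' j' k"
  using assms by (auto simp: shifted_index_def)

text \<open>Transposing the
  coordinates of the blue positions \<open>\<kappa>\<close> moves \<open>i k\<close> of a red position to the row and of a blue
  one to the column; the same holds for \<open>j (k - 1)\<close> unless the edge \<open>(k - 1, k)\<close> is
  monochromatic, and there it is fixed to \<open>w (k - 1)\<close>. So the red factors \<open>u\<close> depend only on
  the row and the blue factors \<open>v\<close> only on the column.\<close>

lemma partial_transpose_slice_factorizes:
  fixes f :: "nat set \<Rightarrow> (nat \<Rightarrow> nat) \<Rightarrow> 'a::comm_semiring_1"
  assumes P: "partition_on {0..d} P" and R: "\<forall>S\<in>P. S \<subseteq> R \<or> S \<subseteq> - R"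
  defines "U \<equiv> {t. t < d \<and> (t \<in> R \<longleftrightarrow> Suc t \<in> R)}" and "\<kappa> \<equiv> {t. t < d \<and> t \<notin> R}"
  shows "\<exists>u v. \<forall>r c. partial_transpose \<kappa>
      (\<lambda>i j. if \<forall>t\<in>U. j t = w t then product_term P f (shifted_index n d i j) else 0) r c
    = u r * v c"
proof -
  define u where "u r = (if \<forall>t\<in>U \<inter> \<kappa>. r t = w t
    then product_term {S\<in>P. S \<subseteq> R} f (shifted_index n d r (\<lambda>t. if t \<in> U then w t else r t))
    else 0)" for r
  define v where "v c = (if \<forall>t\<in>U - \<kappa>. c t = w t
    then product_term {S\<in>P. S \<subseteq> - R} f (shifted_index n d c (\<lambda>t. if t \<in> U then w t else c t))
    else 0)" for c
  have "partial_transpose \<kappa>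
      (\<lambda>i j. if \<forall>t\<in>U. j t = w t then product_term P f (shifted_index n d i j) else 0) r c
    = u r * v c" for r c
  proof -
    let ?I = "\<lambda>t. if t \<in> \<kappa> then c t else r t" and ?J = "\<lambda>t. if t \<in> \<kappa> then r t else c t"
    have fixed_iff: "(\<forall>t\<in>U. ?J t = w t) \<longleftrightarrow> (\<forall>t\<in>U \<inter> \<kappa>. r t = w t) \<and> (\<forall>t\<in>U - \<kappa>. c t = w t)"
      by auto
    show ?thesis
    proof (cases "\<forall>t\<in>U. ?J t = w t")
      case True
      have edge: "k - 1 \<in> \<kappa> \<longleftrightarrow> k \<in> R" if "0 < k" "k \<le> d" "k - 1 \<notin> U" for k
        using that by (cases k) (auto simp: U_def \<kappa>_def)
      have "shifted_index n d ?I ?J k = shifted_index n d r (\<lambda>t. if t \<in> U then w t else r t) k"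
        if "k \<in> R" "k \<in> {0..d}" for k
        using that True edge[of k] by (intro shifted_index_cong) (auto simp: \<kappa>_def)
      moreover have "shifted_index n d ?I ?J k = shifted_index n d c (\<lambda>t. if t \<in> U then w t else c t) k"
        if "k \<notin> R" "k \<in> {0..d}" for k
        using that True edge[of k] by (intro shifted_index_cong) (auto simp: \<kappa>_def)
      ultimately have "product_term P f (shifted_index n d ?I ?J)
          = product_term {S\<in>P. S \<subseteq> R} f (shifted_index n d r (\<lambda>t. if t \<in> U then w t else r t)) *
            product_term {S\<in>P. S \<subseteq> - R} f (shifted_index n d c (\<lambda>t. if t \<in> U then w t else c t))"
        using P R finite_elements[OF finite_atLeastAtMost P] partition_onD1[OF P] partition_onD3[OF P]
        by (intro product_term_split) auto
      with True fixed_iff show ?thesis by (simp add: partial_transpose_def u_def v_def)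
    qed (use fixed_iff in \<open>auto simp: partial_transpose_def u_def v_def\<close>)
  qed
  then show ?thesis by blast
qed

lemma sum_PiE_agree:
  fixes j :: "'i \<Rightarrow> nat"
  assumes "finite U" "\<forall>t\<in>U. j t < n"
  shows "(\<Sum>w\<in>PiE U (\<lambda>_. {0..<n}). if \<forall>t\<in>U. j t = w t then x else 0) = (x :: 'a::comm_monoid_add)"
proof -
  have "(\<Sum>w\<in>PiE U (\<lambda>_. {0..<n}). if \<forall>t\<in>U. j t = w t then x else 0)
      = (\<Sum>w\<in>PiE U (\<lambda>_. {0..<n}). if w = restrict j U then x else 0)"
    by (intro sum.cong refl) (auto simp: PiE_iff extensional_def fun_eq_iff)
  also have "\<dots> = x"
    using assms by (subst sum.delta) (auto intro: finite_PiE)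
  finally show ?thesis .
qed

lemma PT_rank_product_term:
  fixes f :: "nat set \<Rightarrow> (nat \<Rightarrow> nat) \<Rightarrow> 'a::field"
  assumes "n \<ge> 1" and P: "partition_on {0..d} P"
  shows "PT_rank n d (\<lambda>i j. product_term P f (shifted_index n d i j)) \<le> n ^ (d + 1 - card P)"
proof -
  obtain R where R: "\<forall>S\<in>P. S \<subseteq> R \<or> S \<subseteq> - R"
    and monochromatic: "card {t. t < d \<and> (t \<in> R \<longleftrightarrow> Suc t \<in> R)} + card P \<le> d + 1"
    using partition_two_coloring[OF P] by blast
  define U where "U = {t. t < d \<and> (t \<in> R \<longleftrightarrow> Suc t \<in> R)}"
  define \<kappa> where "\<kappa> = {t. t < d \<and> t \<notin> R}"
  define W where "W = PiE U (\<lambda>_. {0..<n})"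
  define T where "T w i j = (if \<forall>t\<in>U. j t = w t then product_term P f (shifted_index n d i j) else 0)"
    for w i j
  have "finite U" by (simp add: U_def)
  have "PT_rank n d (\<lambda>i j. product_term P f (shifted_index n d i j)) \<le> card W"
  proof (rule PT_rank_le_card[of W _ _ T])
    show "finite W" using \<open>finite U\<close> by (simp add: W_def finite_PiE)
    show "PT_basic n d (T w) \<or> (\<forall>i\<in>tuples n d. \<forall>j\<in>tuples n d. T w i j = 0)" for w
    proof (rule disjCI)
      assume "\<not> (\<forall>i\<in>tuples n d. \<forall>j\<in>tuples n d. T w i j = 0)"
      then obtain i j where "i \<in> tuples n d" "j \<in> tuples n d" "T w i j \<noteq> 0" by blast
      moreover obtain u v where "\<forall>r c. partial_transpose \<kappa> (T w) r c = u r * v c"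
        using partial_transpose_slice_factorizes[OF P R, where w = w and n = n and f = f]
        unfolding T_def U_def \<kappa>_def by blast
      moreover have "\<kappa> \<subseteq> {0..<d}" by (auto simp: \<kappa>_def)
      ultimately show "PT_basic n d (T w)"
        by (intro PT_basic_if_partial_transpose_product[of \<kappa> d n "T w" u v i j]) auto
    qed
    show "product_term P f (shifted_index n d i j) = (\<Sum>w\<in>W. T w i j)"
      if "i \<in> tuples n d" "j \<in> tuples n d" for i j
      using that \<open>finite U\<close> unfolding T_def W_def tuples_def
      by (intro sum_PiE_agree[symmetric]) (auto simp: U_def PiE_iff)
  qed
  also have "card W = n ^ card U" using \<open>finite U\<close> by (simp add: W_def card_PiE)
  also have "\<dots> \<le> n ^ (d + 1 - card P)"
  proof (rule power_increasing)
    show "card U \<le> d + 1 - card P" using monochromatic unfolding U_def by linarith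
  qed (use \<open>n \<ge> 1\<close> in simp)
  finally show ?thesis .
qed

section \<open>Set-multilinear formulas as sums of log-product terms\<close>

definition log_product_sum ::
    "nat \<Rightarrow> nat set \<Rightarrow> ((nat \<Rightarrow> nat) \<Rightarrow> 'a::comm_semiring_1)
      \<Rightarrow> (nat set set \<times> (nat set \<Rightarrow> (nat \<Rightarrow> nat) \<Rightarrow> 'a)) list \<Rightarrow> bool" where
  "log_product_sum N D A ts \<longleftrightarrow>
     (\<forall>(P, f)\<in>set ts. partition_on D P \<and> card D \<le> 2 ^ (card P - 1)) \<and>
     (\<forall>a\<in>tdom N D. A a = (\<Sum>(P, f)\<leftarrow>ts. product_term P f a))"

lemma restrict_in_tdom: "a \<in> tdom N D \<Longrightarrow> E \<subseteq> D \<Longrightarrow> restrict a E \<in> tdom N E"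
  unfolding tdom_def by (auto simp: PiE_iff)

lemma sum_list_map_concat:
  "(\<Sum>x\<leftarrow>concat xss. g x) = (\<Sum>xs\<leftarrow>xss. \<Sum>x\<leftarrow>xs. g x)"
  by (induction xss) auto

lemma log_product_sum_Nil: "(\<forall>a\<in>tdom N D. A a = 0) \<Longrightarrow> log_product_sum N D A []"
  by (simp add: log_product_sum_def)

lemma log_product_sum_single_block:
  assumes "card D = 1"
  shows "log_product_sum N D A [({D}, \<lambda>_. A)]"
proof -
  have "D \<noteq> {}" using assms by auto
  moreover have "restrict a D = a" if "a \<in> tdom N D" for a
    using that unfolding tdom_def by (simp add: PiE_restrict)
  ultimately show ?thesis
    using assms by (simp add: log_product_sum_def product_term_def partition_on_space)
qed

lemma log_product_sum_sum:
  assumes "\<And>l. l < m \<Longrightarrow> log_product_sum N D (As l) (tss l)"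
  shows "log_product_sum N D (\<lambda>a. \<Sum>l<m. As l a) (concat (map tss [0..<m]))"
proof -
  have "(\<Sum>l<m. As l a) = (\<Sum>(P, f)\<leftarrow>concat (map tss [0..<m]). product_term P f a)"
    if "a \<in> tdom N D" for a
  proof -
    have "(\<Sum>l<m. As l a) = (\<Sum>l\<leftarrow>[0..<m]. \<Sum>(P, f)\<leftarrow>tss l. product_term P f a)"
      using assms that
      by (simp add: log_product_sum_def interv_sum_list_conv_sum_set_nat lessThan_atLeast0)
    also have "\<dots> = (\<Sum>(P, f)\<leftarrow>concat (map tss [0..<m]). product_term P f a)"
      by (simp add: sum_list_map_concat o_def)
    finally show ?thesis .
  qed
  with assms show ?thesis by (auto simp: log_product_sum_def)
qed

lemma partition_on_insert_block:
  assumes P: "partition_on E P" and "finite E" "E \<inter> F = {}" "F \<noteq> {}"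
  shows "partition_on (E \<union> F) (insert F P)" and "card (insert F P) = Suc (card P)"
proof -
  have "disjnt F (\<Union>P)" using partition_onD1[OF P] assms(3) by (auto simp: disjnt_def)
  moreover have "E \<union> F - F = E" using assms(3) by blast
  ultimately show "partition_on (E \<union> F) (insert F P)" using P assms(4) by (simp add: partition_on_insert)
  have "F \<notin> P" using P assms(3,4) by (auto simp: partition_on_def)
  moreover have "finite P" using P \<open>finite E\<close> by (rule finite_elements[rotated])
  ultimately show "card (insert F P) = Suc (card P)" by simp
qed

lemma product_term_insert_block:
  assumes P: "partition_on E P" and "E \<inter> F = {}" "F \<noteq> {}" "finite E"
  shows "product_term P f (restrict a E) * h (restrict a F) = product_term (insert F P) (f(F := h)) a"
proof -
  have "restrict (restrict a E) S = restrict a S" "S \<noteq> F" if "S \<in> P" for S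
    using that P assms(2,3) by (auto simp: partition_on_def)
  moreover have "F \<notin> P" "finite P"
    using P assms(2-4) finite_elements[OF assms(4) P] by (auto simp: partition_on_def)
  ultimately show ?thesis by (simp add: product_term_def mult.commute)
qed

text \<open>Multiplying by a factor on at most as many new coordinates adds one block and at most
  doubles the number of coordinates, which preserves \<open>card D \<le> 2 ^ (card P - 1)\<close>.\<close>

lemma log_product_sum_mult:
  assumes B: "log_product_sum N E B ts"
    and "finite E" "finite F" "E \<inter> F = {}" "E \<noteq> {}" "F \<noteq> {}" "card F \<le> card E"
  shows "log_product_sum N (E \<union> F) (\<lambda>a. B (restrict a E) * h (restrict a F))
           (map (\<lambda>(P, f). (insert F P, f(F := h))) ts)"
proof -
  have "card (E \<union> F) \<le> 2 ^ (card (insert F P) - 1)"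
    if "partition_on E P" "card E \<le> 2 ^ (card P - 1)" for P
  proof -
    have "card P \<noteq> 0"
      using that(1) \<open>finite E\<close> \<open>E \<noteq> {}\<close> finite_elements by (fastforce simp: partition_on_def)
    have "card (E \<union> F) \<le> 2 * card E" using assms by (simp add: card_Un_disjoint)
    also have "\<dots> \<le> 2 ^ Suc (card P - 1)" using that(2) by simp
    finally show ?thesis
      using partition_on_insert_block(2)[OF that(1) assms(2,4,6)] \<open>card P \<noteq> 0\<close> by simp
  qed
  moreover have "B (restrict a E) * h (restrict a F)
      = (\<Sum>(P, f)\<leftarrow>ts. product_term (insert F P) (f(F := h)) a)"
    if "a \<in> tdom N (E \<union> F)" for a
  proof -
    have "B (restrict a E) = (\<Sum>(P, f)\<leftarrow>ts. product_term P f (restrict a E))"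
      using B restrict_in_tdom[OF that] by (simp add: log_product_sum_def)
    then have "B (restrict a E) * h (restrict a F)
        = (\<Sum>(P, f)\<leftarrow>ts. product_term P f (restrict a E) * h (restrict a F))"
      by (simp add: sum_list_mult_const[symmetric] case_prod_unfold)
    also have "\<dots> = (\<Sum>(P, f)\<leftarrow>ts. product_term (insert F P) (f(F := h)) a)"
    proof (intro arg_cong[where f = sum_list] map_cong refl)
      fix Pf assume "Pf \<in> set ts"
      then have "partition_on E (fst Pf)" using B by (auto simp: log_product_sum_def)
      from product_term_insert_block[OF this assms(4,6,2)]
      show "(case Pf of (P, f) \<Rightarrow> product_term P f (restrict a E) * h (restrict a F))
          = (case Pf of (P, f) \<Rightarrow> product_term (insert F P) (f(F := h)) a)"
        by (simp add: case_prod_unfold)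
    qed
    finally show ?thesis .
  qed
  moreover have "partition_on (E \<union> F) (insert F P)" if "partition_on E P" for P
    using that assms(2,4,6) by (rule partition_on_insert_block(1))
  ultimately show ?thesis
    using B by (auto simp: log_product_sum_def o_def case_prod_unfold)
qed

lemma log_product_sum_product:
  assumes B: "log_product_sum N E B tsB" and C: "log_product_sum N F C tsC"
    and "finite E" "finite F" "E \<inter> F = {}" "E \<noteq> {}" "F \<noteq> {}"
  shows "\<exists>ts. length ts \<le> length tsB + length tsC \<and>
    log_product_sum N (E \<union> F) (\<lambda>a. B (restrict a E) * C (restrict a F)) ts"
proof (cases "card F \<le> card E")
  case True
  with assms have "log_product_sum N (E \<union> F) (\<lambda>a. B (restrict a E) * C (restrict a F))
      (map (\<lambda>(P, f). (insert F P, f(F := C))) tsB)"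
    by (intro log_product_sum_mult) auto
  then show ?thesis by (intro exI[of _ "map (\<lambda>(P, f). (insert F P, f(F := C))) tsB"]) simp
next
  case False
  with assms have "log_product_sum N (F \<union> E) (\<lambda>a. C (restrict a F) * B (restrict a E))
      (map (\<lambda>(P, f). (insert E P, f(E := B))) tsC)"
    by (intro log_product_sum_mult) auto
  then show ?thesis
    by (intro exI[of _ "map (\<lambda>(P, f). (insert E P, f(E := B))) tsC"]) (simp add: Un_commute mult.commute)
qed

lemma smf_imp_log_product_sum:
  assumes "smf N D A s"
  shows "\<exists>ts. length ts \<le> s \<and> log_product_sum N D A ts"
  using assms
proof (induction rule: smf.induct)
  case (base D A)
  show ?case
  proof (cases "\<forall>a\<in>tdom N D. A a = 0")
    case True
    then show ?thesis by (intro exI[of _ "[]"]) (simp add: log_product_sum_Nil)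
  next
    case False
    then show ?thesis
      using base by (intro exI[of _ "[({D}, \<lambda>_. A)]"]) (simp add: log_product_sum_single_block)
  qed
next
  case (step D m E F B b C c A)
  have "\<forall>l\<in>{..<m}. \<exists>ts. length ts \<le> b l + c l \<and>
      log_product_sum N D (\<lambda>a. B l (restrict a (E l)) * C l (restrict a (F l))) ts"
  proof
    fix l assume "l \<in> {..<m}"
    then have "l < m" by simp
    then obtain tsB tsC where B: "length tsB \<le> b l" "log_product_sum N (E l) (B l) tsB"
      and C: "length tsC \<le> c l" "log_product_sum N (F l) (C l) tsC"
      and split: "E l \<noteq> {}" "F l \<noteq> {}" "E l \<inter> F l = {}" "E l \<union> F l = D"
      using step.IH by blast
    have "finite (E l)" "finite (F l)" using split(4) \<open>finite D\<close> by auto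
    from log_product_sum_product[OF B(2) C(2) this split(3,1,2)] obtain ts
      where "length ts \<le> length tsB + length tsC"
        and "log_product_sum N D (\<lambda>a. B l (restrict a (E l)) * C l (restrict a (F l))) ts"
      unfolding split(4) by blast
    with B(1) C(1) show "\<exists>ts. length ts \<le> b l + c l \<and>
        log_product_sum N D (\<lambda>a. B l (restrict a (E l)) * C l (restrict a (F l))) ts"
      by (intro exI[of _ ts]) simp
  qed
  from bchoice[OF this] obtain tss where tss: "\<forall>l\<in>{..<m}. length (tss l) \<le> b l + c l \<and>
      log_product_sum N D (\<lambda>a. B l (restrict a (E l)) * C l (restrict a (F l))) (tss l)"
    by blast
  have "length (concat (map tss [0..<m])) = (\<Sum>l<m. length (tss l))"
    by (simp add: length_concat interv_sum_list_conv_sum_set_nat lessThan_atLeast0 o_def)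
  also have "\<dots> \<le> (\<Sum>l<m. b l + c l)" using tss by (intro sum_mono) auto
  finally have "length (concat (map tss [0..<m])) \<le> (\<Sum>l<m. b l + c l)" .
  moreover have "log_product_sum N D (\<lambda>a. \<Sum>l<m. B l (restrict a (E l)) * C l (restrict a (F l)))
      (concat (map tss [0..<m]))"
    using tss by (intro log_product_sum_sum) blast
  then have "log_product_sum N D A (concat (map tss [0..<m]))"
    using step.hyps(3) by (simp add: log_product_sum_def)
  ultimately show ?case by blast
qed

lemma ex_smf:
  assumes "finite D" "D \<noteq> {}"
  shows "\<exists>s. smf N D (A :: (nat \<Rightarrow> nat) \<Rightarrow> 'a::field) s"
  using assms
proof (induction D arbitrary: A rule: finite_induct)
  case (insert x F)
  show ?case
  proof (cases "F = {}")
    case True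
    then show ?thesis using smf.base[of "{x}" N A] by auto
  next
    case False
    define B :: "nat \<Rightarrow> (nat \<Rightarrow> nat) \<Rightarrow> 'a" where "B l a = (if a x = l then 1 else 0)" for l a
    define C where "C l a = A (a(x := l))" for l a
    define b :: "nat \<Rightarrow> nat" where "b l = (if \<forall>a\<in>tdom N {x}. B l a = 0 then 0 else 1)" for l
    have b: "smf N {x} (B l) (b l)" for l unfolding b_def by (rule smf.base) simp
    have "\<forall>l. \<exists>s. smf N F (C l) s" using insert.IH[OF False] by blast
    then obtain c where c: "\<And>l. smf N F (C l) (c l)" by (metis choice)
    have split: "A a = (\<Sum>l<N. B l (restrict a {x}) * C l (restrict a F))"
      if "a \<in> tdom N (insert x F)" for a
    proof -
      have "a x < N" using that by (auto simp: tdom_def)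
      moreover have "(restrict a F)(x := a x) = a"
        using that insert.hyps(2) by (auto simp: tdom_def PiE_iff extensional_def fun_eq_iff)
      moreover have "(\<Sum>l<N. B l (restrict a {x}) * C l (restrict a F))
          = (\<Sum>l<N. if l = a x then A ((restrict a F)(x := l)) else 0)"
        by (intro sum.cong) (auto simp: B_def C_def)
      ultimately show ?thesis by simp
    qed
    have "smf N (insert x F) A (\<Sum>l<N. b l + c l)"
      using False insert.hyps b c split
      by (intro smf.step[where E = "\<lambda>_. {x}" and F = "\<lambda>_. F" and B = B and C = C])
        (auto simp: card_insert_if Suc_le_eq card_gt_0_iff)
    then show ?thesis by blast
  qed
qed simp

lemma smf_L_sm: "finite D \<Longrightarrow> D \<noteq> {} \<Longrightarrow> smf N D A (L_sm N D A)"
  unfolding L_sm_def by (rule LeastI_ex) (rule ex_smf)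

lemma power_le_powr_log:
  assumes "n \<ge> 1" "d \<ge> 1" "k \<le> d + 1" "d \<le> 2 ^ (k - 1)"
  shows "real (n ^ (d + 1 - k)) \<le> real n powr (real d - log 2 (real d) + 1)"
proof -
  have "log 2 (real d) \<le> real (k - 1)" using assms(2,4) by (intro log2_of_power_le) auto
  then have "real (d + 1 - k) \<le> real d - log 2 (real d) + 1" using assms(3) by linarith
  then have "real n powr real (d + 1 - k) \<le> real n powr (real d - log 2 (real d) + 1)"
    using assms(1) by (intro powr_mono) auto
  then show ?thesis using assms(1) by (simp add: powr_realpow)
qed

lemma PT_rank_product_term_le_powr:
  fixes f :: "nat set \<Rightarrow> (nat \<Rightarrow> nat) \<Rightarrow> 'a::field"
  assumes "n \<ge> 1" "d \<ge> 1" "partition_on {0..d} P" "d + 1 \<le> 2 ^ (card P - 1)"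
  shows "real (PT_rank n d (\<lambda>i j. product_term P f (shifted_index n d i j)))
    \<le> real n powr (real d - log 2 (real d) + 1)"
proof -
  have "card P \<le> d + 1" using card_partition_on_le[OF _ assms(3)] by simp
  then have "real (n ^ (d + 1 - card P)) \<le> real n powr (real d - log 2 (real d) + 1)"
    using assms by (intro power_le_powr_log) auto
  moreover have "PT_rank n d (\<lambda>i j. product_term P f (shifted_index n d i j)) \<le> n ^ (d + 1 - card P)"
    using assms(1,3) by (rule PT_rank_product_term)
  then have "real (PT_rank n d (\<lambda>i j. product_term P f (shifted_index n d i j)))
      \<le> real (n ^ (d + 1 - card P))"
    by (simp only: of_nat_le_iff)
  ultimately show ?thesis by linarith
qed

lemma PT_rank_le_log_product_sum:
  fixes M :: "(nat \<Rightarrow> nat) \<Rightarrow> (nat \<Rightarrow> nat) \<Rightarrow> 'a::field"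
  assumes "n \<ge> 1" "d \<ge> 1" and ts: "log_product_sum (n^2) {0..d} (shifted_tensor n d M) ts"
  shows "real (PT_rank n d M) \<le> real (length ts) * real n powr (real d - log 2 (real d) + 1)"
proof -
  define T where "T l i j = product_term (fst (ts ! l)) (snd (ts ! l)) (shifted_index n d i j)" for l i j
  have "PT_rank n d M = PT_rank n d (\<lambda>i j. \<Sum>l<length ts. T l i j)"
  proof (rule PT_rank_cong)
    fix i j assume ij: "i \<in> tuples n d" "j \<in> tuples n d"
    have "M i j = shifted_tensor n d M (shifted_index n d i j)"
      using shifted_tensor_shifted_index[OF assms(1) ij, of M] by simp
    also have "\<dots> = (\<Sum>(P, f)\<leftarrow>ts. product_term P f (shifted_index n d i j))"
      using ts shifted_index_in_tdom[OF assms(1) ij] by (simp add: log_product_sum_def)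
    also have "\<dots> = (\<Sum>l<length ts. T l i j)"
      by (simp add: T_def sum_list_sum_nth atLeast0LessThan case_prod_unfold)
    finally show "M i j = (\<Sum>l<length ts. T l i j)" .
  qed
  also have "\<dots> \<le> (\<Sum>l<length ts. PT_rank n d (T l))" by (rule PT_rank_sum_le) simp
  finally have "real (PT_rank n d M) \<le> (\<Sum>l<length ts. real (PT_rank n d (T l)))"
    by (simp only: of_nat_le_iff flip: of_nat_sum)
  also have "\<dots> \<le> (\<Sum>l<length ts. real n powr (real d - log 2 (real d) + 1))"
  proof (rule sum_mono)
    fix l assume "l \<in> {..<length ts}"
    then have "partition_on {0..d} (fst (ts ! l))" "d + 1 \<le> 2 ^ (card (fst (ts ! l)) - 1)"
      using ts nth_mem[of l ts] by (auto simp: log_product_sum_def case_prod_unfold)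
    with assms(1,2) show "real (PT_rank n d (T l)) \<le> real n powr (real d - log 2 (real d) + 1)"
      unfolding T_def by (rule PT_rank_product_term_le_powr)
  qed
  finally show ?thesis by simp
qed

theorem theorem1p4:
  fixes M :: "(nat \<Rightarrow> nat) \<Rightarrow> (nat \<Rightarrow> nat) \<Rightarrow> 'a::field"
    and n d :: nat
  assumes "n \<ge> 1" and "d \<ge> 1"
  shows "real (L_sm (n^2) {0..d} (shifted_tensor n d M))
           \<ge> real (PT_rank n d M) / real n powr (real d - log 2 (real d) + 1)"
proof -
  let ?L = "L_sm (n^2) {0..d} (shifted_tensor n d M)"
  let ?B = "real n powr (real d - log 2 (real d) + 1)"
  have "smf (n^2) {0..d} (shifted_tensor n d M) ?L" by (rule smf_L_sm) auto
  then obtain ts where "length ts \<le> ?L" and "log_product_sum (n^2) {0..d} (shifted_tensor n d M) ts"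
    using smf_imp_log_product_sum by blast
  from PT_rank_le_log_product_sum[OF assms this(2)]
  have "real (PT_rank n d M) \<le> real (length ts) * ?B" .
  also have "\<dots> \<le> real ?L * ?B" using \<open>length ts \<le> ?L\<close> by (intro mult_right_mono) auto
  finally show ?thesis using assms(1) by (simp add: divide_le_eq)
qed

end
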